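(* For any values of $k$, $\mu$, and $\nu$, \[ \,_{3}F_{4}\left(\tfrac{1}{2},\tfrac{\mu}{2}+\tfrac{\nu}{2}+\tfrac{1}{2},\tfrac{\mu}{2}+\tfrac{\nu}{2}+1;1,\mu+1,\nu+1,\mu+\nu+1;-k^{2}\right) = 2^{\mu+\nu}\Gamma(\mu+1)\Gamma(\nu+1)\sum_{L=0}^{\infty}\frac{(-1)^{2L}k^{4L}2^{-8L-\mu-\nu}\left(2-\delta_{L0}\right)}{(L!)^{2}\Gamma(L+\mu+1)\Gamma(L+\nu+1)} \,_{1}F_{2}\left(L+\tfrac{1}{2};2L+1,L+\mu+1;-\tfrac{k^{2}}{4}\right)\,_{1}F_{2}\left(L+\tfrac{1}{2};2L+1,L+\nu+1;-\tfrac{k^{2}}{4}\right). \]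
   Context: $\,_{p}F_{q}(a_1,\dots,a_p;b_1,\dots,b_q;z)=\sum_{n\ge0}\frac{(a_1)_n\cdots(a_p)_n}{(b_1)_n\cdots(b_q)_n}\frac{z^n}{n!}$ is the generalized hypergeometric function, with $(c)_n=\Gamma(c+n)/\Gamma(c)$ the Pochhammer symbol. $\delta_{L0}$ is the Kronecker delta (equal to $1$ if $L=0$ and $0$ otherwise). *)

theory Defs
  imports "HOL-Analysis.Analysis"
begin

definition hypergeom :: "complex list \<Rightarrow> complex list \<Rightarrow> complex \<Rightarrow> complex" where
  "hypergeom as bs z =
     (\<Sum>n. (\<Prod>a\<leftarrow>as. pochhammer a n) / (\<Prod>b\<leftarrow>bs. pochhammer b n) * z ^ n / fact n)"

definition kdelta :: "nat \<Rightarrow> nat \<Rightarrow> complex" where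
  "kdelta i j = (if i = j then 1 else 0)"

end

theory Submission
  imports Defs
begin

text \<open>
  Put w = k^2. Expanding both 1F2 factors turns the right-hand side into a triple series over
  (L, i, j) whose terms are multiples of w^(2L+i+j); it converges absolutely since
  1/|(c)_n| = O(2^n/n!). Collect the terms of degree N and write a = L + i, b = L + j.
  The sum over L is then a Vandermonde convolution of the rows 2a and 2b of Pascal's triangle,
  folded at the centre (this is where the weight 2 - \<delta>(L,0) comes from), and equals
  binom(2N, N). The remaining sum over a is the Chu-Vandermonde identity for rising factorials,
  and by Legendre's duplication formula the result is the N-th term of the 3F4 series.
\<close>

lemma pochhammer_half:
  "pochhammer (1/2 :: 'a::field_char_0) n = fact (2*n) / (4^n * fact n)"
proof -
  have "(2::'a) ^ (2*n) = 4^n"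
    by (simp add: power_mult)
  then show ?thesis
    using fact_double[of n, where 'a='a] by (simp add: field_simps)
qed

lemma pochhammer_nonzero:
  "(c :: 'a::field_char_0) \<notin> \<int>\<^sub>\<le>\<^sub>0 \<Longrightarrow> pochhammer c n \<noteq> 0"
  using pochhammer_eq_0_imp_nonpos_Int by blast

lemma pochhammer_half_shift_ratio:
  "pochhammer (of_nat L + 1/2 :: 'a::field_char_0) i / pochhammer (2 * of_nat L + 1) i
     = of_nat ((2*(L+i)) choose (2*L+i)) * fact L * fact i / (4^i * fact (L+i))"
proof -
  have half: "pochhammer (1/2 :: 'a) (L+i) = pochhammer (1/2) L * pochhammer (of_nat L + 1/2) i"
    by (simp add: pochhammer_product' add.commute)
  have odd: "fact (2*L+i) = (fact (2*L) :: 'a) * pochhammer (2 * of_nat L + 1) i"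
    using pochhammer_product'[of "1::'a" "2*L" i] by (simp add: pochhammer_fact add.commute)
  have binom: "(of_nat ((2*(L+i)) choose (2*L+i)) :: 'a) = fact (2*(L+i)) / (fact (2*L+i) * fact i)"
    by (subst binomial_fact) (auto simp: algebra_simps)
  have "pochhammer (1/2 :: 'a) L \<noteq> 0"
    by (simp add: pochhammer_half)
  moreover have "fact (2*L+i) \<noteq> (0::'a)"
    by simp
  ultimately show ?thesis
    using half unfolding binom odd by (simp add: pochhammer_half field_simps power_add)
qed

lemma pochhammer_binomial_sum_shifted:
  fixes \<mu> \<nu> :: "'a::comm_ring_1"
  shows "(\<Sum>a\<le>N. of_nat (N choose a) * pochhammer (\<mu> + 1 + of_nat a) (N - a)
                 * pochhammer (\<nu> + 1 + of_nat (N - a)) a)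
       = pochhammer (\<mu> + \<nu> + of_nat N + 1) N"
proof -
  have reflect: "pochhammer (- (x + of_nat N)) m = (-1)^m * pochhammer (x + 1 + of_nat (N - m)) m"
    if "m \<le> N" for x :: 'a and m
    using pochhammer_minus[of "x + of_nat N" m] that by (simp add: of_nat_diff algebra_simps)
  have sign: "(-1::'a)^a * (-1)^(N - a) = (-1)^N" if "a \<le> N" for a
    using that by (simp flip: power_add)
  have square: "(-1::'a)^N * (-1)^N = 1"
    by (simp flip: power_add)
  have "pochhammer (\<mu> + \<nu> + of_nat N + 1) N
      = (-1)^N * pochhammer (- (\<nu> + of_nat N) + - (\<mu> + of_nat N)) N"
    using reflect[of N "\<mu> + \<nu> + of_nat N"] square by (simp add: algebra_simps)
  also have "\<dots> = (-1)^N * (\<Sum>a\<le>N. of_nat (N choose a) * pochhammer (- (\<nu> + of_nat N)) a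
                                  * pochhammer (- (\<mu> + of_nat N)) (N - a))"
    by (simp only: pochhammer_binomial_sum)
  also have "\<dots> = (\<Sum>a\<le>N. of_nat (N choose a) * pochhammer (\<mu> + 1 + of_nat a) (N - a)
                         * pochhammer (\<nu> + 1 + of_nat (N - a)) a)"
    unfolding sum_distrib_left
  proof (rule sum.cong[OF refl])
    fix a assume "a \<in> {..N}"
    then have a: "a \<le> N" by simp
    have "pochhammer (- (\<mu> + of_nat N)) (N - a) = (-1)^(N - a) * pochhammer (\<mu> + 1 + of_nat a) (N - a)"
      using reflect[of "N - a" \<mu>] a by simp
    then show "(-1)^N * (of_nat (N choose a) * pochhammer (- (\<nu> + of_nat N)) a
                         * pochhammer (- (\<mu> + of_nat N)) (N - a))
        = of_nat (N choose a) * pochhammer (\<mu> + 1 + of_nat a) (N - a)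
                    * pochhammer (\<nu> + 1 + of_nat (N - a)) a"
      unfolding reflect[OF a, of \<nu>] sign[OF a, symmetric] using square by (simp add: algebra_simps)
  qed
  finally show ?thesis ..
qed

lemma vandermonde_split_at_centre:
  assumes "a + b = N"
  shows "(\<Sum>L\<le>b. ((2*a) choose (a+L)) * ((2*b) choose (b+L)))
       + (\<Sum>L\<in>{1..a}. ((2*a) choose (a+L)) * ((2*b) choose (b+L))) = (2*N) choose N"
proof -
  define g where "g m = ((2*a) choose m) * ((2*b) choose (N-m))" for m
  have "(2*N) choose N = (\<Sum>m\<le>N. g m)"
    using vandermonde[of "2*a" "2*b" N] assms unfolding g_def by (simp flip: add_mult_distrib2)
  also have "{..N} = {..<a} \<union> {a..N}"
    using assms by auto
  also have "sum g ({..<a} \<union> {a..N}) = sum g {..<a} + sum g {a..N}"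
    by (rule sum.union_disjoint) auto
  also have "sum g {a..N} = (\<Sum>L\<le>b. ((2*a) choose (a+L)) * ((2*b) choose (b+L)))"
  proof (rule sym, rule sum.reindex_bij_witness[of _ "\<lambda>m. m - a" "\<lambda>L. a + L"])
    fix L assume L: "L \<in> {..b}"
    have "(2*b) choose (N - (a+L)) = (2*b) choose (2*b - (N - (a+L)))"
      using L assms by (intro binomial_symmetric) auto
    also have "2*b - (N - (a+L)) = b + L"
      using L assms by auto
    finally show "g (a+L) = ((2*a) choose (a+L)) * ((2*b) choose (b+L))"
      unfolding g_def by simp
  qed (use assms in auto)
  also have "sum g {..<a} = (\<Sum>L\<in>{1..a}. ((2*a) choose (a+L)) * ((2*b) choose (b+L)))"
  proof (rule sym, rule sum.reindex_bij_witness[of _ "\<lambda>m. a - m" "\<lambda>L. a - L"])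
    fix L assume L: "L \<in> {1..a}"
    have "(2*a) choose (a - L) = (2*a) choose (2*a - (a - L))"
      using L by (intro binomial_symmetric) auto
    also have "2*a - (a - L) = a + L"
      using L by auto
    moreover have "N - (a - L) = b + L"
      using L assms by auto
    ultimately show "g (a - L) = ((2*a) choose (a+L)) * ((2*b) choose (b+L))"
      unfolding g_def by simp
  qed (use assms in auto)
  finally show ?thesis
    by simp
qed

lemma central_binomial_convolution:
  assumes "a + b = N"
  shows "(\<Sum>L\<le>min a b. (if L = 0 then 1 else 2) * (((2*a) choose (a+L)) * ((2*b) choose (b+L))))
       = (2*N) choose N"
proof -
  define f where "f L = ((2*a) choose (a+L)) * ((2*b) choose (b+L))" for L
  have vanish: "f L = 0" if "L > min a b" for L
    using that unfolding f_def by auto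
  have "(\<Sum>L\<le>min a b. (if L = 0 then 1 else 2) * f L)
      = (\<Sum>L\<le>min a b. f L) + (\<Sum>L\<le>min a b. if L = 0 then 0 else f L)"
    by (simp add: sum.distrib[symmetric]) (rule sum.cong, auto)
  also have "(\<Sum>L\<le>min a b. if L = 0 then 0 else f L) = (\<Sum>L\<in>{1..min a b}. f L)"
    by (rule sum.mono_neutral_cong_right) auto
  also have "(\<Sum>L\<le>min a b. f L) = (\<Sum>L\<le>b. f L)"
    by (rule sum.mono_neutral_left) (auto intro!: vanish)
  also have "(\<Sum>L\<in>{1..min a b}. f L) = (\<Sum>L\<in>{1..a}. f L)"
    by (rule sum.mono_neutral_left) (auto intro!: vanish)
  finally show ?thesis
    using vandermonde_split_at_centre[OF assms] unfolding f_def by simp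
qed

lemma sum_inverse_pochhammer_products:
  fixes \<mu> \<nu> :: "'a::field_char_0"
  assumes "\<mu> + 1 \<notin> \<int>\<^sub>\<le>\<^sub>0" and "\<nu> + 1 \<notin> \<int>\<^sub>\<le>\<^sub>0"
  shows "(\<Sum>a\<le>N. 1 / (fact a * fact (N - a) * pochhammer (\<mu> + 1) a * pochhammer (\<nu> + 1) (N - a)))
       = pochhammer (\<mu> + \<nu> + of_nat N + 1) N / (fact N * pochhammer (\<mu> + 1) N * pochhammer (\<nu> + 1) N)"
proof -
  define D where "D = fact N * pochhammer (\<mu> + 1) N * pochhammer (\<nu> + 1) N"
  have "1 / (fact a * fact (N - a) * pochhammer (\<mu> + 1) a * pochhammer (\<nu> + 1) (N - a))
      = of_nat (N choose a) * pochhammer (\<mu> + 1 + of_nat a) (N - a) * pochhammer (\<nu> + 1 + of_nat (N - a)) a / D"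
    if a: "a \<le> N" for a
  proof -
    have split_\<mu>: "pochhammer (\<mu> + 1) N = pochhammer (\<mu> + 1) a * pochhammer (\<mu> + 1 + of_nat a) (N - a)"
      using a by (rule pochhammer_product)
    have split_\<nu>: "pochhammer (\<nu> + 1) N = pochhammer (\<nu> + 1) (N - a) * pochhammer (\<nu> + 1 + of_nat (N - a)) a"
      using pochhammer_product[of "N - a" N "\<nu> + 1"] a by simp
    have binom: "(of_nat (N choose a) :: 'a) = fact N / (fact a * fact (N - a))"
      using a by (rule binomial_fact)
    have "pochhammer (\<mu> + 1) N \<noteq> 0" "pochhammer (\<nu> + 1) N \<noteq> 0"
      using assms by (simp_all add: pochhammer_nonzero)
    then show ?thesis
      unfolding D_def binom split_\<mu> split_\<nu> by (simp add: field_simps)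
  qed
  then have "(\<Sum>a\<le>N. 1 / (fact a * fact (N - a) * pochhammer (\<mu> + 1) a * pochhammer (\<nu> + 1) (N - a)))
      = (\<Sum>a\<le>N. of_nat (N choose a) * pochhammer (\<mu> + 1 + of_nat a) (N - a)
                  * pochhammer (\<nu> + 1 + of_nat (N - a)) a) / D"
    by (simp add: sum_divide_distrib)
  then show ?thesis
    unfolding pochhammer_binomial_sum_shifted D_def .
qed

text \<open>
  In terms of w = k^2: inner_term \<mu> w L and lhs_term \<mu> \<nu> w are the term sequences of the
  1F2 factor at -w/4 and of the 3F4 at -w, and outer_coeff \<mu> \<nu> w L is the L-th coefficient
  of the right-hand series divided by 2 powr (\<mu> + \<nu>) * Gamma (\<mu> + 1) * Gamma (\<nu> + 1).
\<close>

definition inner_term :: "complex \<Rightarrow> complex \<Rightarrow> nat \<Rightarrow> nat \<Rightarrow> complex" where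
  "inner_term \<mu> w L i = pochhammer (of_nat L + 1/2) i
     / (pochhammer (2 * of_nat L + 1) i * pochhammer (of_nat L + \<mu> + 1) i) * (- w / 4) ^ i / fact i"

definition outer_coeff :: "complex \<Rightarrow> complex \<Rightarrow> complex \<Rightarrow> nat \<Rightarrow> complex" where
  "outer_coeff \<mu> \<nu> w L = (2 - kdelta L 0) * (w / 16) ^ (2*L)
     / ((fact L)^2 * pochhammer (\<mu> + 1) L * pochhammer (\<nu> + 1) L)"

definition triple_term :: "complex \<Rightarrow> complex \<Rightarrow> complex \<Rightarrow> nat \<times> nat \<times> nat \<Rightarrow> complex" where
  "triple_term \<mu> \<nu> w = (\<lambda>(L, i, j). outer_coeff \<mu> \<nu> w L * inner_term \<mu> w L i * inner_term \<nu> w L j)"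

definition lhs_term :: "complex \<Rightarrow> complex \<Rightarrow> complex \<Rightarrow> nat \<Rightarrow> complex" where
  "lhs_term \<mu> \<nu> w n = pochhammer (1/2) n * pochhammer (\<mu>/2 + \<nu>/2 + 1/2) n * pochhammer (\<mu>/2 + \<nu>/2 + 1) n
     / (pochhammer 1 n * pochhammer (\<mu> + 1) n * pochhammer (\<nu> + 1) n * pochhammer (\<mu> + \<nu> + 1) n)
     * (- w) ^ n / fact n"

definition degree_slice :: "nat \<Rightarrow> (nat \<times> nat \<times> nat) set" where
  "degree_slice N = {(L, i, j). 2*L + i + j = N}"

lemma inner_term_closed_form:
  assumes "\<mu> + 1 \<notin> \<int>\<^sub>\<le>\<^sub>0"
  shows "inner_term \<mu> w L i = of_nat ((2*(L+i)) choose (2*L+i)) * fact L * pochhammer (\<mu> + 1) L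
      * (- w / 16) ^ i / (fact (L+i) * pochhammer (\<mu> + 1) (L+i))"
proof -
  have split: "pochhammer (\<mu> + 1) (L+i) = pochhammer (\<mu> + 1) L * pochhammer (of_nat L + \<mu> + 1) i"
    by (simp add: pochhammer_product' add_ac)
  have nonzero: "pochhammer (\<mu> + 1) L \<noteq> 0" "pochhammer (of_nat L + \<mu> + 1) i \<noteq> 0"
    using pochhammer_nonzero[OF assms, of "L+i"] unfolding split by auto
  have power: "(- w / 4) ^ i = (- w / 16) ^ i * 4 ^ i"
    by (simp add: power_divide field_simps flip: power_mult_distrib)
  have "inner_term \<mu> w L i = pochhammer (of_nat L + 1/2) i / pochhammer (2 * of_nat L + 1) i
      / pochhammer (of_nat L + \<mu> + 1) i * (- w / 4) ^ i / fact i"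
    unfolding inner_term_def by (simp add: field_simps)
  also have "\<dots> = of_nat ((2*(L+i)) choose (2*L+i)) * fact L * fact i / (4^i * fact (L+i))
      / pochhammer (of_nat L + \<mu> + 1) i * (- w / 4) ^ i / fact i"
    by (simp only: pochhammer_half_shift_ratio)
  also have "\<dots> = of_nat ((2*(L+i)) choose (2*L+i)) * fact L * pochhammer (\<mu> + 1) L
      * (- w / 16) ^ i / (fact (L+i) * pochhammer (\<mu> + 1) (L+i))"
    unfolding split power using nonzero by (simp add: field_simps)
  finally show ?thesis .
qed

lemma triple_term_closed_form:
  assumes "\<mu> + 1 \<notin> \<int>\<^sub>\<le>\<^sub>0" and "\<nu> + 1 \<notin> \<int>\<^sub>\<le>\<^sub>0"
  shows "triple_term \<mu> \<nu> w (L, i, j) = (2 - kdelta L 0) * (- w / 16) ^ (2*L + i + j)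
      * of_nat ((2*(L+i)) choose (2*L+i)) * of_nat ((2*(L+j)) choose (2*L+j))
      / (fact (L+i) * fact (L+j) * pochhammer (\<mu> + 1) (L+i) * pochhammer (\<nu> + 1) (L+j))"
proof -
  have "pochhammer (\<mu> + 1) L \<noteq> 0" "pochhammer (\<nu> + 1) L \<noteq> 0"
    "pochhammer (\<mu> + 1) (L+i) \<noteq> 0" "pochhammer (\<nu> + 1) (L+j) \<noteq> 0"
    using assms by (simp_all add: pochhammer_nonzero)
  moreover have "(w / 16) ^ (2*L) = (- w / 16) ^ (2*L)"
    by (simp add: power_mult)
  ultimately show ?thesis
    unfolding triple_term_def outer_coeff_def inner_term_closed_form[OF assms(1)]
      inner_term_closed_form[OF assms(2)]
    by (simp add: field_simps power_add power2_eq_square)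
qed

lemma lhs_term_closed_form:
  assumes "\<mu> + \<nu> + 1 \<notin> \<int>\<^sub>\<le>\<^sub>0"
  shows "lhs_term \<mu> \<nu> w N = (- w / 16) ^ N * of_nat ((2*N) choose N) * pochhammer (\<mu> + \<nu> + of_nat N + 1) N
      / (fact N * pochhammer (\<mu> + 1) N * pochhammer (\<nu> + 1) N)"
proof -
  have "2 * (\<mu>/2 + \<nu>/2 + 1/2) = \<mu> + \<nu> + 1" "\<mu>/2 + \<nu>/2 + 1/2 + 1/2 = \<mu>/2 + \<nu>/2 + 1"
    "of_nat (2 ^ (2*N)) = (4::complex) ^ N"
    by (simp_all add: field_simps power_mult power2_eq_square flip: power_mult_distrib)
  then have "pochhammer (\<mu> + \<nu> + 1) (2*N) = 4^N * (pochhammer (\<mu>/2 + \<nu>/2 + 1/2) N * pochhammer (\<mu>/2 + \<nu>/2 + 1) N)"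
    using pochhammer_double[of "\<mu>/2 + \<nu>/2 + 1/2" N] by (simp only: mult.assoc)
  moreover have "pochhammer (\<mu> + \<nu> + 1) (2*N) = pochhammer (\<mu> + \<nu> + 1) N * pochhammer (\<mu> + \<nu> + of_nat N + 1) N"
    using pochhammer_product'[of "\<mu> + \<nu> + 1" N N] by (simp add: mult_2 add_ac)
  ultimately have duplication: "pochhammer (\<mu>/2 + \<nu>/2 + 1/2) N * pochhammer (\<mu>/2 + \<nu>/2 + 1) N
      = pochhammer (\<mu> + \<nu> + 1) N * pochhammer (\<mu> + \<nu> + of_nat N + 1) N / 4^N"
    by (simp add: field_simps)
  have binom: "(of_nat ((2*N) choose N) :: complex) = fact (2*N) / (fact N * fact N)"
    by (subst binomial_fact) (auto simp: mult_2)
  have "pochhammer (\<mu> + \<nu> + 1) N \<noteq> 0"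
    using assms by (rule pochhammer_nonzero)
  moreover have "(16::complex) ^ N = 4^N * 4^N"
    by (simp flip: power_mult_distrib)
  moreover have "lhs_term \<mu> \<nu> w N = pochhammer (1/2) N
      * (pochhammer (\<mu>/2 + \<nu>/2 + 1/2) N * pochhammer (\<mu>/2 + \<nu>/2 + 1) N)
      / (pochhammer 1 N * pochhammer (\<mu> + 1) N * pochhammer (\<nu> + 1) N * pochhammer (\<mu> + \<nu> + 1) N)
      * (- w) ^ N / fact N"
    unfolding lhs_term_def by (simp only: mult.assoc)
  ultimately show ?thesis
    unfolding duplication binom pochhammer_half power_divide
    by (simp add: pochhammer_fact[symmetric] field_simps)
qed

lemma finite_degree_slice: "finite (degree_slice N)"
proof (rule finite_subset)
  show "degree_slice N \<subseteq> {..N} \<times> {..N} \<times> {..N}"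
    unfolding degree_slice_def by auto
qed auto

lemma sum_degree_slice:
  "sum f (degree_slice N) = (\<Sum>a\<le>N. \<Sum>L\<le>min a (N - a). f (L, a - L, N - a - L))"
proof -
  have "sum f (degree_slice N) = sum (\<lambda>(a, L). f (L, a - L, N - a - L)) (SIGMA a:{..N}. {..min a (N - a)})"
    by (rule sum.reindex_bij_witness[of _ "\<lambda>(a, L). (L, a - L, N - a - L)" "\<lambda>(L, i, j). (L + i, L)"])
      (auto simp: degree_slice_def)
  then show ?thesis
    by (simp add: sum.Sigma)
qed

lemma sum_triple_term_row:
  assumes "\<mu> + 1 \<notin> \<int>\<^sub>\<le>\<^sub>0" and "\<nu> + 1 \<notin> \<int>\<^sub>\<le>\<^sub>0" and "a + b = N"
  shows "(\<Sum>L\<le>min a b. triple_term \<mu> \<nu> w (L, a - L, b - L))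
       = (- w / 16) ^ N * of_nat ((2*N) choose N) / (fact a * fact b * pochhammer (\<mu> + 1) a * pochhammer (\<nu> + 1) b)"
proof -
  define D where "D = fact a * fact b * pochhammer (\<mu> + 1) a * pochhammer (\<nu> + 1) b"
  have "triple_term \<mu> \<nu> w (L, a - L, b - L) = (- w / 16) ^ N / D
      * of_nat ((if L = 0 then 1 else 2) * (((2*a) choose (a+L)) * ((2*b) choose (b+L))))"
    if "L \<le> min a b" for L
  proof -
    have "2*L + (a - L) + (b - L) = N" "L + (a - L) = a" "L + (b - L) = b"
      "2*L + (a - L) = a + L" "2*L + (b - L) = b + L"
      using that assms(3) by auto
    moreover have "2 - kdelta L 0 = (if L = 0 then 1 else 2)"
      by (simp add: kdelta_def)
    ultimately show ?thesis
      unfolding triple_term_closed_form[OF assms(1,2)] D_def by (simp add: ac_simps)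
  qed
  then have "(\<Sum>L\<le>min a b. triple_term \<mu> \<nu> w (L, a - L, b - L))
      = (- w / 16) ^ N / D * of_nat (\<Sum>L\<le>min a b. (if L = 0 then 1 else 2) * (((2*a) choose (a+L)) * ((2*b) choose (b+L))))"
    by (simp add: sum_distrib_left)
  then show ?thesis
    unfolding central_binomial_convolution[OF assms(3)] D_def by simp
qed

lemma sum_triple_term_degree_slice:
  assumes "\<mu> + 1 \<notin> \<int>\<^sub>\<le>\<^sub>0" and "\<nu> + 1 \<notin> \<int>\<^sub>\<le>\<^sub>0" and "\<mu> + \<nu> + 1 \<notin> \<int>\<^sub>\<le>\<^sub>0"
  shows "sum (triple_term \<mu> \<nu> w) (degree_slice N) = lhs_term \<mu> \<nu> w N"
proof -
  have "sum (triple_term \<mu> \<nu> w) (degree_slice N)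
      = (\<Sum>a\<le>N. (- w / 16) ^ N * of_nat ((2*N) choose N)
          * (1 / (fact a * fact (N - a) * pochhammer (\<mu> + 1) a * pochhammer (\<nu> + 1) (N - a))))"
    unfolding sum_degree_slice
  proof (intro sum.cong refl)
    fix a assume "a \<in> {..N}"
    then have "a + (N - a) = N"
      by simp
    then show "(\<Sum>L\<le>min a (N - a). triple_term \<mu> \<nu> w (L, a - L, N - a - L))
        = (- w / 16) ^ N * of_nat ((2*N) choose N)
          * (1 / (fact a * fact (N - a) * pochhammer (\<mu> + 1) a * pochhammer (\<nu> + 1) (N - a)))"
      unfolding sum_triple_term_row[OF assms(1,2) \<open>a + (N - a) = N\<close>] by simp
  qed
  also have "\<dots> = lhs_term \<mu> \<nu> w N"
    unfolding sum_distrib_left[symmetric] sum_inverse_pochhammer_products[OF assms(1,2)]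
      lhs_term_closed_form[OF assms(3)] by simp
  finally show ?thesis .
qed

lemma fact_div_pochhammer_Suc_le:
  fixes c :: "'a::real_normed_field"
  assumes "c \<notin> \<int>\<^sub>\<le>\<^sub>0" and "2 * norm c + 1 \<le> real n"
  shows "fact (Suc n) / (2 ^ Suc n * norm (pochhammer c (Suc n))) \<le> fact n / (2^n * norm (pochhammer c n))"
proof -
  have "real n \<le> norm (c + of_nat n) + norm c"
    using norm_triangle_ineq4[of "c + of_nat n" c] by (simp add: norm_of_nat)
  then have "real n + 1 \<le> 2 * norm (c + of_nat n)"
    using assms(2) by linarith
  then have grow: "(real n + 1) / 2 * norm (pochhammer c n) \<le> norm (pochhammer c (Suc n))"
    unfolding pochhammer_rec' norm_mult by (intro mult_right_mono) auto
  have "norm (pochhammer c n) > 0" "norm (pochhammer c (Suc n)) > 0"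
    using pochhammer_nonzero[OF assms(1)] by simp_all
  then have "fact (Suc n) / (2 ^ Suc n * norm (pochhammer c (Suc n)))
      \<le> fact (Suc n) / (2 ^ Suc n * ((real n + 1) / 2 * norm (pochhammer c n)))"
    using grow by (intro divide_left_mono mult_left_mono mult_pos_pos) auto
  also have "\<dots> = ((real n + 1) * fact n) / ((real n + 1) * (2^n * norm (pochhammer c n)))"
    by (simp only: fact_Suc power_Suc of_nat_Suc add.commute[of 1] mult_ac) simp
  also have "\<dots> = fact n / (2^n * norm (pochhammer c n))"
    by (rule mult_divide_mult_cancel_left) simp
  finally show ?thesis .
qed

lemma inverse_pochhammer_bound:
  fixes c :: "'a::real_normed_field"
  assumes "c \<notin> \<int>\<^sub>\<le>\<^sub>0"
  obtains C where "\<And>n. norm (1 / pochhammer c n) \<le> C * 2^n / fact n"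
proof -
  define h :: "nat \<Rightarrow> real" where "h n = fact n / (2^n * norm (pochhammer c n))" for n
  define N0 where "N0 = nat \<lceil>2 * norm c + 1\<rceil>"
  define C where "C = Max (h ` {..N0})"
  have h_le: "h n \<le> C" for n
  proof (cases "n \<le> N0")
    case True
    then show ?thesis
      unfolding C_def by (intro Max_ge) auto
  next
    case False
    then have "N0 \<le> n"
      by simp
    then show ?thesis
    proof (induction n rule: dec_induct)
      case base
      then show ?case
        unfolding C_def by (intro Max_ge) auto
    next
      case (step m)
      have "2 * norm c + 1 \<le> real m"
        using step.hyps real_nat_ceiling_ge[of "2 * norm c + 1"] unfolding N0_def by linarith
      then have "h (Suc m) \<le> h m"
        unfolding h_def by (rule fact_div_pochhammer_Suc_le[OF assms])
      then show ?case
        using step.IH by linarith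
    qed
  qed
  show ?thesis
  proof
    fix n
    have "norm (1 / pochhammer c n) = h n * 2^n / fact n"
      unfolding h_def using pochhammer_nonzero[OF assms, of n] by (simp add: norm_divide)
    also have "\<dots> \<le> C * 2^n / fact n"
      using h_le[of n] by (intro divide_right_mono mult_right_mono) auto
    finally show "norm (1 / pochhammer c n) \<le> C * 2^n / fact n" .
  qed
qed

lemma norm_inner_term_le:
  assumes "\<mu> + 1 \<notin> \<int>\<^sub>\<le>\<^sub>0"
    and C: "\<And>n. norm (1 / pochhammer (\<mu> + 1) n) \<le> C * 2^n / fact n"
  shows "norm (inner_term \<mu> w L i) \<le> C * 8^L * norm (pochhammer (\<mu> + 1) L) * ((norm w / 2)^i / fact i)"
proof -
  define P where "P = norm (pochhammer (\<mu> + 1) L)"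
  define F :: real where "F = fact (L+i)"
  define X where "X = fact L * P * (norm w / 16)^i / F"
  have "X \<ge> 0" "F > 0"
    unfolding X_def P_def F_def by simp_all
  have "real ((2*(L+i)) choose (2*L+i)) \<le> 2 ^ (2*(L+i))"
    by (metis binomial_le_pow2 of_nat_le_iff of_nat_numeral of_nat_power)
  also have "(2::real) ^ (2*(L+i)) = 4^(L+i)"
    unfolding power_mult by simp
  finally have binom: "real ((2*(L+i)) choose (2*L+i)) \<le> 4^(L+i)" .
  have "norm (inner_term \<mu> w L i) = real ((2*(L+i)) choose (2*L+i)) * X * norm (1 / pochhammer (\<mu> + 1) (L+i))"
    unfolding inner_term_closed_form[OF assms(1)] X_def P_def F_def
    by (simp add: norm_mult norm_divide norm_power)
  also have "\<dots> \<le> 4^(L+i) * X * (C * 2^(L+i) / F)"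
    unfolding F_def using C[of "L+i"] binom \<open>X \<ge> 0\<close>
    by (intro mult_mono) auto
  also have "\<dots> = C * 8^L * P * (norm w / 2)^i * (fact L / (F * F))"
  proof -
    have "(4::real)^(L+i) * 2^(L+i) = 8^(L+i)" "(16::real)^i = 8^i * 2^i"
      by (simp_all flip: power_mult_distrib)
    then show ?thesis
      unfolding X_def using \<open>F > 0\<close> by (simp add: field_simps power_divide power_add)
  qed
  also have "\<dots> \<le> C * 8^L * P * (norm w / 2)^i * (1 / fact i)"
  proof (rule mult_left_mono)
    have "fact L * fact i \<le> F * F"
      unfolding F_def by (intro mult_mono fact_mono) auto
    then show "fact L / (F * F) \<le> 1 / fact i"
      using \<open>F > 0\<close> by (simp add: field_simps)
    show "0 \<le> C * 8^L * P * (norm w / 2)^i"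
      using C[of 0] unfolding P_def by simp
  qed
  finally show ?thesis
    unfolding P_def by simp
qed

lemma norm_outer_coeff_le:
  assumes "\<mu> + 1 \<notin> \<int>\<^sub>\<le>\<^sub>0" and "\<nu> + 1 \<notin> \<int>\<^sub>\<le>\<^sub>0"
  shows "norm (outer_coeff \<mu> \<nu> w L) * (8^L * norm (pochhammer (\<mu> + 1) L)) * (8^L * norm (pochhammer (\<nu> + 1) L))
    \<le> 2 * ((norm w ^ 2 / 4)^L / fact L)"
proof -
  define d where "d = norm (2 - kdelta L 0)"
  define P\<^sub>\<mu> where "P\<^sub>\<mu> = norm (pochhammer (\<mu> + 1) L)"
  define P\<^sub>\<nu> where "P\<^sub>\<nu> = norm (pochhammer (\<nu> + 1) L)"
  have "P\<^sub>\<mu> > 0" "P\<^sub>\<nu> > 0"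
    unfolding P\<^sub>\<mu>_def P\<^sub>\<nu>_def using assms by (simp_all add: pochhammer_nonzero)
  moreover have "norm (outer_coeff \<mu> \<nu> w L) = d * (norm w / 16)^(2*L) / (fact L * fact L * P\<^sub>\<mu> * P\<^sub>\<nu>)"
    unfolding outer_coeff_def d_def P\<^sub>\<mu>_def P\<^sub>\<nu>_def
    by (simp add: norm_mult norm_divide norm_power power2_eq_square)
  ultimately have "norm (outer_coeff \<mu> \<nu> w L) * (8^L * P\<^sub>\<mu>) * (8^L * P\<^sub>\<nu>)
      = d * (8^L * 8^L * (norm w / 16)^(2*L)) / (fact L * fact L)"
    by (simp add: field_simps)
  also have "8^L * 8^L * (norm w / 16)^(2*L) = (norm w ^ 2 / 4)^L"
  proof -
    have "(8::real)^L * 8^L = 64^L"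
      by (simp flip: power_mult_distrib)
    moreover have "64 * (norm w / 16)^2 = norm w ^ 2 / 4"
      by (simp add: power2_eq_square)
    ultimately show ?thesis
      by (metis power_mult power_mult_distrib)
  qed
  also have "d * (norm w ^ 2 / 4)^L / (fact L * fact L) \<le> 2 * (norm w ^ 2 / 4)^L / (fact L * fact L)"
    by (intro divide_right_mono mult_right_mono) (simp_all add: d_def kdelta_def)
  also have "\<dots> \<le> 2 * (norm w ^ 2 / 4)^L / fact L"
  proof (rule divide_left_mono)
    show "fact L \<le> (fact L * fact L :: real)"
      using fact_ge_1[of L, where 'a=real] by (simp add: mult_le_cancel_left1)
  qed simp_all
  finally show ?thesis
    unfolding P\<^sub>\<mu>_def P\<^sub>\<nu>_def by simp
qed

lemma norm_triple_term_le:
  assumes "\<mu> + 1 \<notin> \<int>\<^sub>\<le>\<^sub>0" and C\<^sub>\<mu>: "\<And>n. norm (1 / pochhammer (\<mu> + 1) n) \<le> C\<^sub>\<mu> * 2^n / fact n"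
    and "\<nu> + 1 \<notin> \<int>\<^sub>\<le>\<^sub>0" and C\<^sub>\<nu>: "\<And>n. norm (1 / pochhammer (\<nu> + 1) n) \<le> C\<^sub>\<nu> * 2^n / fact n"
  shows "norm (triple_term \<mu> \<nu> w (L, i, j))
    \<le> 2 * C\<^sub>\<mu> * C\<^sub>\<nu> * ((norm w ^ 2 / 4)^L / fact L) * ((norm w / 2)^i / fact i) * ((norm w / 2)^j / fact j)"
proof -
  define e\<^sub>i where "e\<^sub>i = (norm w / 2)^i / fact i"
  define e\<^sub>j where "e\<^sub>j = (norm w / 2)^j / fact j"
  have "C\<^sub>\<mu> \<ge> 0" "C\<^sub>\<nu> \<ge> 0" "e\<^sub>i \<ge> 0" "e\<^sub>j \<ge> 0"
    using C\<^sub>\<mu>[of 0] C\<^sub>\<nu>[of 0] unfolding e\<^sub>i_def e\<^sub>j_def by simp_all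
  have "norm (triple_term \<mu> \<nu> w (L, i, j))
      = norm (outer_coeff \<mu> \<nu> w L) * norm (inner_term \<mu> w L i) * norm (inner_term \<nu> w L j)"
    unfolding triple_term_def by (simp add: norm_mult)
  also have "\<dots> \<le> norm (outer_coeff \<mu> \<nu> w L)
      * (C\<^sub>\<mu> * 8^L * norm (pochhammer (\<mu> + 1) L) * e\<^sub>i) * (C\<^sub>\<nu> * 8^L * norm (pochhammer (\<nu> + 1) L) * e\<^sub>j)"
    unfolding e\<^sub>i_def e\<^sub>j_def
    by (intro mult_mono norm_inner_term_le assms mult_nonneg_nonneg) (use C\<^sub>\<mu>[of 0] in auto)
  also have "\<dots> = C\<^sub>\<mu> * C\<^sub>\<nu> * e\<^sub>i * e\<^sub>j
      * (norm (outer_coeff \<mu> \<nu> w L) * (8^L * norm (pochhammer (\<mu> + 1) L)) * (8^L * norm (pochhammer (\<nu> + 1) L)))"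
    by (simp only: ac_simps)
  also have "\<dots> \<le> C\<^sub>\<mu> * C\<^sub>\<nu> * e\<^sub>i * e\<^sub>j * (2 * ((norm w ^ 2 / 4)^L / fact L))"
    using \<open>C\<^sub>\<mu> \<ge> 0\<close> \<open>C\<^sub>\<nu> \<ge> 0\<close> \<open>e\<^sub>i \<ge> 0\<close> \<open>e\<^sub>j \<ge> 0\<close>
    by (intro mult_left_mono norm_outer_coeff_le assms(1,3)) simp_all
  finally show ?thesis
    unfolding e\<^sub>i_def e\<^sub>j_def by (simp only: ac_simps)
qed

lemma summable_on_exp_series: "(\<lambda>n. x ^ n / fact n :: real) summable_on UNIV"
proof (rule norm_summable_imp_summable_on)
  show "summable (\<lambda>n. norm (x ^ n / fact n))"
    using summable_exp[of "\<bar>x\<bar>"] by (simp add: abs_mult power_abs divide_inverse mult.commute)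
qed

lemma summable_on_product_nonneg:
  fixes p :: "'a \<Rightarrow> real" and q :: "'b \<Rightarrow> real"
  assumes "p summable_on A" and "q summable_on B" and "\<And>x. p x \<ge> 0" and "\<And>y. q y \<ge> 0"
  shows "(\<lambda>(x, y). p x * q y) summable_on A \<times> B"
proof (rule summable_on_SigmaI[where g = "\<lambda>x. p x * infsum q B"])
  show "((\<lambda>y. case (x, y) of (x, y) \<Rightarrow> p x * q y) has_sum p x * infsum q B) B" if "x \<in> A" for x
    using assms(2) by (simp add: has_sum_cmult_right)
  show "(\<lambda>x. p x * infsum q B) summable_on A"
    using assms(1) by (rule summable_on_cmult_left)
qed (use assms in auto)

lemma summable_on_triple_term:
  assumes "\<mu> + 1 \<notin> \<int>\<^sub>\<le>\<^sub>0" and "\<nu> + 1 \<notin> \<int>\<^sub>\<le>\<^sub>0"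
  shows "triple_term \<mu> \<nu> w summable_on UNIV"
proof -
  obtain C\<^sub>\<mu> where C\<^sub>\<mu>: "\<And>n. norm (1 / pochhammer (\<mu> + 1) n) \<le> C\<^sub>\<mu> * 2^n / fact n"
    using inverse_pochhammer_bound[OF assms(1)] by blast
  obtain C\<^sub>\<nu> where C\<^sub>\<nu>: "\<And>n. norm (1 / pochhammer (\<nu> + 1) n) \<le> C\<^sub>\<nu> * 2^n / fact n"
    using inverse_pochhammer_bound[OF assms(2)] by blast
  define a where "a L = (norm w ^ 2 / 4)^L / fact L" for L
  define e where "e i = (norm w / 2)^i / fact i" for i
  define g where "g = (\<lambda>(L, i, j). 2 * C\<^sub>\<mu> * C\<^sub>\<nu> * (a L * (e i * e j)))"
  have "(\<lambda>(i, j). e i * e j) summable_on UNIV \<times> UNIV"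
    unfolding e_def by (rule summable_on_product_nonneg[OF summable_on_exp_series summable_on_exp_series]) simp_all
  then have "(\<lambda>(L, ij). a L * (case ij of (i, j) \<Rightarrow> e i * e j)) summable_on UNIV \<times> UNIV"
    by (intro summable_on_product_nonneg) (auto simp: a_def e_def summable_on_exp_series)
  then have "g summable_on UNIV"
    unfolding g_def by (simp add: case_prod_unfold summable_on_cmult_right)
  moreover have "norm (triple_term \<mu> \<nu> w p) \<le> g p" for p
  proof -
    obtain L i j where "p = (L, i, j)"
      by (cases p) auto
    then show ?thesis
      using norm_triple_term_le[OF assms(1) C\<^sub>\<mu> assms(2) C\<^sub>\<nu>, of w L i j]
      unfolding g_def a_def e_def by (simp only: prod.case mult.assoc)
  qed
  ultimately have "(\<lambda>p. norm (triple_term \<mu> \<nu> w p)) summable_on UNIV"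
    by (rule summable_on_comparison_test) simp_all
  then show ?thesis
    by (rule abs_summable_summable)
qed

lemma has_sum_inner_term:
  assumes "\<mu> + 1 \<notin> \<int>\<^sub>\<le>\<^sub>0"
  shows "(inner_term \<mu> w L has_sum suminf (inner_term \<mu> w L)) UNIV"
proof -
  obtain C where C: "\<And>n. norm (1 / pochhammer (\<mu> + 1) n) \<le> C * 2^n / fact n"
    using inverse_pochhammer_bound[OF assms] by blast
  have "(\<lambda>i. C * 8^L * norm (pochhammer (\<mu> + 1) L) * ((norm w / 2)^i / fact i)) summable_on UNIV"
    by (intro summable_on_cmult_right summable_on_exp_series)
  then have "(\<lambda>i. norm (inner_term \<mu> w L i)) summable_on UNIV"
    by (rule summable_on_comparison_test) (use norm_inner_term_le[OF assms C] in auto)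
  then have "(inner_term \<mu> w L has_sum infsum (inner_term \<mu> w L) UNIV) UNIV"
    by (rule has_sum_infsum[OF abs_summable_summable])
  moreover from this have "suminf (inner_term \<mu> w L) = infsum (inner_term \<mu> w L) UNIV"
    by (intro sums_unique[symmetric] has_sum_imp_sums)
  ultimately show ?thesis
    by simp
qed

lemma has_sum_triple_term_row:
  assumes "\<mu> + 1 \<notin> \<int>\<^sub>\<le>\<^sub>0" and "\<nu> + 1 \<notin> \<int>\<^sub>\<le>\<^sub>0"
  shows "((\<lambda>ij. triple_term \<mu> \<nu> w (L, ij))
          has_sum outer_coeff \<mu> \<nu> w L * suminf (inner_term \<mu> w L) * suminf (inner_term \<nu> w L)) UNIV"
proof -
  have "(\<lambda>(L, ij). triple_term \<mu> \<nu> w (L, ij)) summable_on Sigma UNIV (\<lambda>_. UNIV)"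
    using summable_on_triple_term[OF assms] by simp
  then have "(\<lambda>ij. triple_term \<mu> \<nu> w (L, ij)) summable_on UNIV"
    by (rule summable_on_SigmaD1) simp
  then have "(\<lambda>ij. triple_term \<mu> \<nu> w (L, ij)) summable_on Sigma UNIV (\<lambda>_. UNIV)"
    by simp
  then have "((\<lambda>ij. triple_term \<mu> \<nu> w (L, ij))
      has_sum outer_coeff \<mu> \<nu> w L * suminf (inner_term \<mu> w L) * suminf (inner_term \<nu> w L)) (Sigma UNIV (\<lambda>_. UNIV))"
  proof (rule has_sum_SigmaI[rotated 2])
    fix i
    show "((\<lambda>j. triple_term \<mu> \<nu> w (L, i, j)) has_sum outer_coeff \<mu> \<nu> w L * inner_term \<mu> w L i * suminf (inner_term \<nu> w L)) UNIV"
      unfolding triple_term_def prod.case by (rule has_sum_cmult_right[OF has_sum_inner_term[OF assms(2)]])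
  next
    show "((\<lambda>i. outer_coeff \<mu> \<nu> w L * inner_term \<mu> w L i * suminf (inner_term \<nu> w L))
        has_sum outer_coeff \<mu> \<nu> w L * suminf (inner_term \<mu> w L) * suminf (inner_term \<nu> w L)) UNIV"
      by (intro has_sum_cmult_left has_sum_cmult_right has_sum_inner_term assms(1))
  qed
  then show ?thesis
    by simp
qed

lemma has_sum_lhs_term:
  assumes "\<mu> + 1 \<notin> \<int>\<^sub>\<le>\<^sub>0" and "\<nu> + 1 \<notin> \<int>\<^sub>\<le>\<^sub>0" and "\<mu> + \<nu> + 1 \<notin> \<int>\<^sub>\<le>\<^sub>0"
  shows "(lhs_term \<mu> \<nu> w has_sum infsum (triple_term \<mu> \<nu> w) UNIV) UNIV"
proof -
  have "bij_betw snd (Sigma UNIV degree_slice) UNIV"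
    by (rule bij_betwI[where g = "\<lambda>(L, i, j). (2*L + i + j, (L, i, j))"])
      (auto simp: degree_slice_def)
  moreover have "(triple_term \<mu> \<nu> w has_sum infsum (triple_term \<mu> \<nu> w) UNIV) UNIV"
    using summable_on_triple_term[OF assms(1,2)] by (rule has_sum_infsum)
  ultimately have "((\<lambda>x. triple_term \<mu> \<nu> w (snd x)) has_sum infsum (triple_term \<mu> \<nu> w) UNIV) (Sigma UNIV degree_slice)"
    by (subst has_sum_reindex_bij_betw) auto
  then have "((\<lambda>N. sum (triple_term \<mu> \<nu> w) (degree_slice N)) has_sum infsum (triple_term \<mu> \<nu> w) UNIV) UNIV"
    by (rule has_sum_Sigma') (simp add: finite_degree_slice)
  then show ?thesis
    by (simp add: sum_triple_term_degree_slice[OF assms])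
qed

lemma has_sum_outer_series:
  assumes "\<mu> + 1 \<notin> \<int>\<^sub>\<le>\<^sub>0" and "\<nu> + 1 \<notin> \<int>\<^sub>\<le>\<^sub>0"
  shows "((\<lambda>L. outer_coeff \<mu> \<nu> w L * suminf (inner_term \<mu> w L) * suminf (inner_term \<nu> w L))
          has_sum infsum (triple_term \<mu> \<nu> w) UNIV) UNIV"
proof -
  have "(triple_term \<mu> \<nu> w has_sum infsum (triple_term \<mu> \<nu> w) UNIV) (Sigma UNIV (\<lambda>_. UNIV))"
    using summable_on_triple_term[OF assms] by simp
  then show ?thesis
    by (rule has_sum_Sigma') (rule has_sum_triple_term_row[OF assms])
qed

lemma hypergeom_eq_suminf_lhs_term:
  "hypergeom [1/2, \<mu>/2 + \<nu>/2 + 1/2, \<mu>/2 + \<nu>/2 + 1] [1, \<mu> + 1, \<nu> + 1, \<mu> + \<nu> + 1] (- w)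
     = suminf (lhs_term \<mu> \<nu> w)"
  unfolding hypergeom_def lhs_term_def by (simp add: mult.assoc)

lemma hypergeom_eq_suminf_inner_term:
  "hypergeom [of_nat L + 1/2] [2 * of_nat L + 1, of_nat L + \<mu> + 1] (- w / 4) = suminf (inner_term \<mu> w L)"
  unfolding hypergeom_def inner_term_def by simp

lemma rhs_summand_eq:
  fixes k \<mu> \<nu> :: complex
  assumes "\<mu> + 1 \<notin> \<int>\<^sub>\<le>\<^sub>0" and "\<nu> + 1 \<notin> \<int>\<^sub>\<le>\<^sub>0"
  shows "2 powr (\<mu> + \<nu>) * Gamma (\<mu> + 1) * Gamma (\<nu> + 1)
      * (((-1) ^ (2*L) * k ^ (4*L) * 2 powr (- (8 * of_nat L) - \<mu> - \<nu>) * (2 - kdelta L 0))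
           / ((fact L)^2 * Gamma (of_nat L + \<mu> + 1) * Gamma (of_nat L + \<nu> + 1))
         * hypergeom [of_nat L + 1/2] [2 * of_nat L + 1, of_nat L + \<mu> + 1] (- (k^2) / 4)
         * hypergeom [of_nat L + 1/2] [2 * of_nat L + 1, of_nat L + \<nu> + 1] (- (k^2) / 4))
    = outer_coeff \<mu> \<nu> (k^2) L * suminf (inner_term \<mu> (k^2) L) * suminf (inner_term \<nu> (k^2) L)"
proof -
  have Gamma_shift: "Gamma (of_nat L + c + 1) = pochhammer (c + 1) L * Gamma (c + 1)"
    if "c + 1 \<notin> \<int>\<^sub>\<le>\<^sub>0" for c :: complex
    using pochhammer_Gamma[OF that, of L] that by (simp add: Gamma_eq_zero_iff add_ac field_simps)
  have "(2::complex) powr (\<mu> + \<nu>) * 2 powr (- (8 * of_nat L) - \<mu> - \<nu>) = 2 powr (- of_nat (8*L))"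
    by (simp flip: powr_add)
  also have "\<dots> = 1 / 2 ^ (8*L)"
    unfolding powr_minus_divide by (subst powr_nat') simp_all
  also have "(2::complex) ^ (8*L) = 16 ^ (2*L)"
    by (simp add: power_mult flip: power_mult_distrib)
  finally have powr: "2 powr (- (8 * of_nat L) - \<mu> - \<nu>) = 1 / (16 ^ (2*L) * 2 powr (\<mu> + \<nu>))"
    by (simp add: field_simps)
  have sign: "(-1) ^ (2*L) * k ^ (4*L) = (k^2) ^ (2*L)"
    by (simp flip: power_mult)
  have "Gamma (\<mu> + 1) \<noteq> 0" "Gamma (\<nu> + 1) \<noteq> 0"
    using assms by (simp_all add: Gamma_eq_zero_iff)
  moreover have "pochhammer (\<mu> + 1) L \<noteq> 0" "pochhammer (\<nu> + 1) L \<noteq> 0"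
    using assms by (simp_all add: pochhammer_nonzero)
  moreover have "(2::complex) powr (\<mu> + \<nu>) \<noteq> 0"
    by simp
  ultimately show ?thesis
    unfolding Gamma_shift[OF assms(1)] Gamma_shift[OF assms(2)] hypergeom_eq_suminf_inner_term
      powr sign outer_coeff_def power_divide
    by (simp add: field_simps)
qed

theorem theorem2:
  fixes k \<mu> \<nu> :: complex
  assumes "\<mu> + 1 \<notin> \<int>\<^sub>\<le>\<^sub>0" and "\<nu> + 1 \<notin> \<int>\<^sub>\<le>\<^sub>0" and "\<mu> + \<nu> + 1 \<notin> \<int>\<^sub>\<le>\<^sub>0"
  shows "hypergeom [1/2, \<mu>/2 + \<nu>/2 + 1/2, \<mu>/2 + \<nu>/2 + 1] [1, \<mu> + 1, \<nu> + 1, \<mu> + \<nu> + 1] (- (k^2))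
    = 2 powr (\<mu> + \<nu>) * Gamma (\<mu> + 1) * Gamma (\<nu> + 1) *
      (\<Sum>L. ((-1) ^ (2*L) * k ^ (4*L) * 2 powr (- (8 * of_nat L) - \<mu> - \<nu>) * (2 - kdelta L 0))
             / ((fact L)^2 * Gamma (of_nat L + \<mu> + 1) * Gamma (of_nat L + \<nu> + 1))
           * hypergeom [of_nat L + 1/2] [2 * of_nat L + 1, of_nat L + \<mu> + 1] (- (k^2) / 4)
           * hypergeom [of_nat L + 1/2] [2 * of_nat L + 1, of_nat L + \<nu> + 1] (- (k^2) / 4))"
    (is "_ = ?c * suminf ?s")
proof -
  define X where "X = infsum (triple_term \<mu> \<nu> (k^2)) UNIV"
  have "?c \<noteq> 0"
    using assms(1,2) by (simp add: Gamma_eq_zero_iff)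
  have rhs: "(\<lambda>L. ?c * ?s L) sums X"
    using has_sum_imp_sums[OF has_sum_outer_series[OF assms(1,2)]]
    unfolding X_def rhs_summand_eq[OF assms(1,2)] .
  then have "summable ?s"
    using \<open>?c \<noteq> 0\<close> by (rule summable_mult_D[OF sums_summable])
  have "hypergeom [1/2, \<mu>/2 + \<nu>/2 + 1/2, \<mu>/2 + \<nu>/2 + 1] [1, \<mu> + 1, \<nu> + 1, \<mu> + \<nu> + 1] (- (k^2))
      = suminf (lhs_term \<mu> \<nu> (k^2))"
    by (rule hypergeom_eq_suminf_lhs_term)
  also have "\<dots> = X"
    unfolding X_def by (rule sums_unique[symmetric], rule has_sum_imp_sums[OF has_sum_lhs_term[OF assms]])
  also have "\<dots> = suminf (\<lambda>L. ?c * ?s L)"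
    using rhs by (rule sums_unique)
  also have "\<dots> = ?c * suminf ?s"
    using \<open>summable ?s\<close> by (rule suminf_mult)
  finally show ?thesis .
qed

end
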